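(* Let $t$ be a positive integer. For every finite chordal trigraph $H$ whose total graph $\mathcal T(H)$ has clique number at most $t+1$, every set $X\subseteq V(G_t)$ such that $G_t[X]$ is $H$-free, and every $u\in V(G_t)$, there exists a downward path $P_u$ from $u$ in $T_t$ such that $|V(P_u)\cap X|\le |V(H)|-1$.
   Context: A trigraph is $(V,E_B,E_R)$ with disjoint sets $E_B$ (black edges) and $E_R$ (red edges) of pairs of $V$; for $u\neq v$ the adjacency type of $uv$ is black, red, or non-edge. Its total graph is $(V,E_B\cup E_R)$; it is chordal if its total graph is chordal. $G[X]$ is the subtrigraph induced by $X$ (keeping black and red edges inside $X$). Two trigraphs are isomorphic if a bijection between vertex sets preserves all adjacency types; $G$ is $H$-free if no induced subtrigraph of $G$ is isomorphic to $H$. Construction of $G_t$ and $T_t$: a countably infinite trigraph $G_t$ and rooted tree $T_t$ on the same vertex set, partitioned into finite layers $L_0,L_1,\dots$ each inducing a left-to-right path of black edges. $L_0$ is a single vertex, the root of $T_t$. With $L_{\le i}=L_0\cup\dots\cup L_i$, layer $L_{i+1}$ is built (starting empty) as follows: for each $u\in L_i$ from left to right, let $N^\uparrow[u]:=(N_{\mathcal T(G_t)}(u)\cap L_{\le i-1})\cup\{u\}$; for every ordered pair $(B,R)$ of disjoint subsets of $N^\uparrow[u]$ with $|B\cup R|\le t$, append a new vertex $v_{B,R}$ at the right end of $L_{i+1}$, joined by a black edge to the previously rightmost vertex of $L_{i+1}$ (if any), make it a child of $u$ in $T_t$, and add black edges from $v_{B,R}$ to all of $B$ and red edges to all of $R$.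 A downward path from $u$ in $T_t$ is an infinite path $u_1u_2\dots$ in $T_t$ with $u_1=u$ and $u_i$ a child of $u_{i-1}$ for all $i>1$. *)

theory Defs
  imports Main
begin

text \<open>A trigraph is a triple (V, E_B, E_R): vertex set, black edges, red edges;
  edges are 2-element subsets of V.\<close>

type_synonym 'a trigraph = "'a set \<times> 'a set set \<times> 'a set set"

definition tverts :: "'a trigraph \<Rightarrow> 'a set" where "tverts G = fst G"
definition tblack :: "'a trigraph \<Rightarrow> 'a set set" where "tblack G = fst (snd G)"
definition tred :: "'a trigraph \<Rightarrow> 'a set set" where "tred G = snd (snd G)"

definition is_trigraph :: "'a trigraph \<Rightarrow> bool" where
  "is_trigraph G \<longleftrightarrow> tblack G \<inter> tred G = {} \<and>
     (\<forall>e \<in> tblack G \<union> tred G. \<exists>x y. x \<noteq> y \<and> x \<in> tverts G \<and> y \<in> tverts G \<and> e = {x, y})"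

definition total_edges :: "'a trigraph \<Rightarrow> 'a set set" where
  "total_edges G = tblack G \<union> tred G"

definition chordal_graph :: "'a set \<Rightarrow> 'a set set \<Rightarrow> bool" where
  "chordal_graph V E \<longleftrightarrow>
    (\<forall>cs. distinct cs \<and> length cs \<ge> 4 \<and> set cs \<subseteq> V \<and>
       (\<forall>i < length cs. {cs ! i, cs ! ((i + 1) mod length cs)} \<in> E) \<longrightarrow>
       (\<exists>i < length cs. \<exists>j < length cs. i \<noteq> j \<and>
          j \<noteq> (i + 1) mod length cs \<and> i \<noteq> (j + 1) mod length cs \<and>
          {cs ! i, cs ! j} \<in> E))"

definition chordal_trigraph :: "'a trigraph \<Rightarrow> bool" where
  "chordal_trigraph G \<longleftrightarrow> chordal_graph (tverts G) (total_edges G)"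

definition clique_number_le :: "'a set \<Rightarrow> 'a set set \<Rightarrow> nat \<Rightarrow> bool" where
  "clique_number_le V E k \<longleftrightarrow>
    (\<forall>K \<subseteq> V. finite K \<and> (\<forall>x\<in>K. \<forall>y\<in>K. x \<noteq> y \<longrightarrow> {x, y} \<in> E) \<longrightarrow> card K \<le> k)"

definition induced_sub :: "'a trigraph \<Rightarrow> 'a set \<Rightarrow> 'a trigraph" where
  "induced_sub G X = (X, {e \<in> tblack G. e \<subseteq> X}, {e \<in> tred G. e \<subseteq> X})"

definition trigraph_iso :: "'a trigraph \<Rightarrow> 'b trigraph \<Rightarrow> bool" where
  "trigraph_iso G H \<longleftrightarrow> (\<exists>f. bij_betw f (tverts G) (tverts H) \<and>
     (\<forall>a \<in> tverts G. \<forall>b \<in> tverts G. a \<noteq> b \<longrightarrow>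
        ({a, b} \<in> tblack G \<longleftrightarrow> {f a, f b} \<in> tblack H) \<and>
        ({a, b} \<in> tred G \<longleftrightarrow> {f a, f b} \<in> tred H)))"

definition H_free :: "'a trigraph \<Rightarrow> 'b trigraph \<Rightarrow> bool" where
  "H_free G H \<longleftrightarrow> \<not> (\<exists>Y \<subseteq> tverts G. trigraph_iso (induced_sub G Y) H)"

text \<open>The vertex set is the whole type 'v. lay v is the index of the layer of v,
  pos v its position (0-based, left to right) inside its layer, par v its parent in T_t
  (meaningless for the root), lab v = (B,R) the pair used to create v (meaningless for the root),
  EB and ER the black and red edges of G_t.\<close>

definition Nup :: "('v \<Rightarrow> nat) \<Rightarrow> 'v set set \<Rightarrow> 'v set set \<Rightarrow> 'v \<Rightarrow> 'v set" where
  "Nup lay EB ER u = {w. {u, w} \<in> EB \<union> ER \<and> lay w < lay u} \<union> {u}"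

definition admissible :: "nat \<Rightarrow> ('v \<Rightarrow> nat) \<Rightarrow> 'v set set \<Rightarrow> 'v set set \<Rightarrow> 'v \<Rightarrow> 'v set \<Rightarrow> 'v set \<Rightarrow> bool" where
  "admissible t lay EB ER u B R \<longleftrightarrow> B \<inter> R = {} \<and> B \<union> R \<subseteq> Nup lay EB ER u \<and>
     finite (B \<union> R) \<and> card (B \<union> R) \<le> t"

definition Gt_construction ::
  "nat \<Rightarrow> ('v \<Rightarrow> nat) \<Rightarrow> ('v \<Rightarrow> nat) \<Rightarrow> ('v \<Rightarrow> 'v) \<Rightarrow> ('v \<Rightarrow> 'v set \<times> 'v set)
     \<Rightarrow> 'v set set \<Rightarrow> 'v set set \<Rightarrow> bool" where
  "Gt_construction t lay pos par lab EB ER \<longleftrightarrow>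
     (\<exists>!r. lay r = 0) \<and>
     (\<forall>i. finite {v. lay v = i}) \<and>
     (\<forall>i. bij_betw pos {v. lay v = i} {..< card {v. lay v = i}}) \<and>
     (\<forall>v. 0 < lay v \<longrightarrow> Suc (lay (par v)) = lay v \<and>
          admissible t lay EB ER (par v) (fst (lab v)) (snd (lab v))) \<and>
     (\<forall>u B R. admissible t lay EB ER u B R \<longrightarrow>
          (\<exists>!v. 0 < lay v \<and> par v = u \<and> lab v = (B, R))) \<and>
     (\<forall>v w. 0 < lay v \<and> lay v = lay w \<and> pos (par v) < pos (par w) \<longrightarrow> pos v < pos w) \<and>
     EB = {{v, w} | v w. lay v = lay w \<and> pos w = Suc (pos v)}
          \<union> {{v, b} | v b. 0 < lay v \<and> b \<in> fst (lab v)} \<and>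
     ER = {{v, r} | v r. 0 < lay v \<and> r \<in> snd (lab v)}"

definition downward_path :: "('v \<Rightarrow> nat) \<Rightarrow> ('v \<Rightarrow> 'v) \<Rightarrow> 'v \<Rightarrow> (nat \<Rightarrow> 'v) \<Rightarrow> bool" where
  "downward_path lay par u p \<longleftrightarrow> p 0 = u \<and>
     (\<forall>i. lay (p (Suc i)) = Suc (lay (p i)) \<and> par (p (Suc i)) = p i)"

end

theory Submission
  imports Defs
begin

(* Suppose every downward path from u meets X in at least n = |V(H)| vertices; then H embeds
   into G_t[X] greedily. Order V(H) as h 0, ..., h (n - 1) so that the earlier neighbours of
   each vertex form a clique (chordal graphs have such perfect elimination orders); by the
   clique bound each vertex has at most t earlier neighbours. Let x 0, ..., x (m - 1) be placed
   on pairwise distinct levels. If h m has earlier neighbours, let h p be the last one: the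
   others are neighbours of h p, so their images lie in the upper neighbourhood of x p and the
   pair of images of the black and of the red earlier neighbours of h m is admissible at x p.
   The tree path from u to x p, continued through the children created for that pair, meets X
   at least n times, hence on some level not used yet; the first such vertex becomes x m.
   Vertices on different levels are adjacent only as prescribed by the label of the deeper one,
   so x reproduces the black and red edges of H exactly. *)

section \<open>Chordal graphs have perfect elimination orders\<close>

fun path_edges :: "'a list \<Rightarrow> 'a set set" where
  "path_edges (a # b # zs) = insert {a, b} (path_edges (b # zs))"
| "path_edges _ = {}"

lemma path_edges_append:
  "path_edges (xs @ ys) =
     path_edges xs \<union> path_edges ys \<union> (if xs = [] \<or> ys = [] then {} else {{last xs, hd ys}})"
  by (induction xs rule: path_edges.induct) (auto simp: neq_Nil_conv)

lemma path_edges_Cons: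
  "path_edges (a # zs) = (if zs = [] then {} else insert {a, hd zs} (path_edges zs))"
  by (cases zs) auto

lemma path_edges_Cons_snoc:
  "zs \<noteq> [] \<Longrightarrow> path_edges (x # zs @ [y]) = insert {x, hd zs} (insert {last zs, y} (path_edges zs))"
  by (auto simp: path_edges_append path_edges_Cons)

lemma path_edges_rev: "path_edges (rev zs) = path_edges zs"
  by (induction zs) (auto simp: path_edges_append path_edges_Cons last_rev insert_commute)

lemma path_edges_nth: "path_edges zs = (\<lambda>i. {zs ! i, zs ! Suc i}) ` {..<length zs - 1}"
  by (induction zs rule: path_edges.induct) (auto simp: lessThan_Suc_eq_insert_0 image_image)

lemma path_edges_take: "path_edges (take n zs) \<subseteq> path_edges zs"
  using path_edges_append[of "take n zs" "drop n zs"] by (simp only: append_take_drop_id) blast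

lemma path_edges_drop: "path_edges (drop n zs) \<subseteq> path_edges zs"
  using path_edges_append[of "take n zs" "drop n zs"] by (simp only: append_take_drop_id) blast

lemma path_edges_cycle:
  assumes "cs \<noteq> []"
  shows "path_edges (cs @ [hd cs]) = (\<lambda>i. {cs ! i, cs ! (Suc i mod length cs)}) ` {..<length cs}"
proof -
  have "{(cs @ [hd cs]) ! i, (cs @ [hd cs]) ! Suc i} = {cs ! i, cs ! (Suc i mod length cs)}"
    if "i < length cs" for i
    using that assms by (cases "Suc i = length cs") (auto simp: nth_append hd_conv_nth)
  then show ?thesis
    unfolding path_edges_nth by (intro image_cong) auto
qed

definition chordless :: "'a set set \<Rightarrow> 'a list \<Rightarrow> bool" where
  "chordless E zs \<longleftrightarrow> (\<forall>a\<in>set zs. \<forall>b\<in>set zs. a \<noteq> b \<and> {a, b} \<in> E \<longrightarrow> {a, b} \<in> path_edges zs)"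

lemma walk_take_drop:
  assumes walk: "path_edges zs \<subseteq> E" and ij: "i < j" "j < length zs" and "{zs ! i, zs ! j} \<in> E"
  shows "path_edges (take (Suc i) zs @ drop j zs) \<subseteq> E" "take (Suc i) zs @ drop j zs \<noteq> []"
    "hd (take (Suc i) zs @ drop j zs) = hd zs" "last (take (Suc i) zs @ drop j zs) = last zs"
    "set (take (Suc i) zs @ drop j zs) \<subseteq> set zs"
proof -
  have "last (take (Suc i) zs) = zs ! i" "hd (drop j zs) = zs ! j"
    using ij by (simp_all add: take_Suc_conv_app_nth hd_drop_conv_nth)
  then show "path_edges (take (Suc i) zs @ drop j zs) \<subseteq> E"
    using path_edges_take[of "Suc i" zs] path_edges_drop[of j zs] walk assms(4)
    by (auto simp: path_edges_append)
  have "take (Suc i) zs \<noteq> []" using ij by (cases zs) auto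
  then show "take (Suc i) zs @ drop j zs \<noteq> []" "hd (take (Suc i) zs @ drop j zs) = hd zs"
    by (simp_all add: hd_append)
  show "last (take (Suc i) zs @ drop j zs) = last zs" using ij by simp
  show "set (take (Suc i) zs @ drop j zs) \<subseteq> set zs" by (auto dest: in_set_takeD in_set_dropD)
qed

lemma not_chordless_nth:
  assumes "\<not> chordless E zs"
  obtains i j where "Suc i < j" "j < length zs" "{zs ! i, zs ! j} \<in> E"
proof -
  obtain a b where ab: "a \<in> set zs" "b \<in> set zs" "a \<noteq> b" "{a, b} \<in> E" "{a, b} \<notin> path_edges zs"
    using assms unfolding chordless_def by blast
  obtain i j where ij: "i < length zs" "j < length zs" "zs ! i = a" "zs ! j = b"
    using ab(1,2) by (auto simp: in_set_conv_nth)
  have "\<exists>i' j'. i' < j' \<and> j' < length zs \<and> {zs ! i', zs ! j'} = {a, b}"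
  proof (cases "i < j")
    case True
    then show ?thesis using ij by blast
  next
    case False
    then have "j < i" using ij ab(3) by (cases "i = j") auto
    then show ?thesis using ij by (intro exI[of _ j] exI[of _ i]) (auto simp: insert_commute)
  qed
  then obtain i' j' where ij': "i' < j'" "j' < length zs" "{zs ! i', zs ! j'} = {a, b}" by blast
  moreover have "Suc i' \<noteq> j'" using ij' ab(5) unfolding path_edges_nth by force
  ultimately show thesis using ab(4) by (intro that[of i' j']) auto
qed

lemma walk_shorten:
  assumes walk: "path_edges zs \<subseteq> E" and "\<not> (distinct zs \<and> chordless E zs)"
  obtains ws where "path_edges ws \<subseteq> E" "ws \<noteq> []" "hd ws = hd zs" "last ws = last zs"
    "set ws \<subseteq> set zs" "length ws < length zs"
proof (cases "distinct zs")
  case False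
  then obtain i j where ij: "i < j" "j < length zs" "zs ! i = zs ! j"
    by (metis distinct_conv_nth linorder_neqE_nat)
  show thesis
  proof (cases i)
    case 0
    have "hd (drop j zs) = hd zs" using ij 0 by (cases zs) (auto simp: hd_drop_conv_nth)
    then show thesis
      using that[of "drop j zs"] path_edges_drop[of j zs] set_drop_subset[of j zs] walk ij 0 by auto
  next
    case (Suc i')
    have "{zs ! i', zs ! j} \<in> E" using walk ij Suc unfolding path_edges_nth by force
    then show thesis using that walk_take_drop[OF walk, of i' j] ij Suc by simp
  qed
next
  case True
  then obtain i j where "Suc i < j" "j < length zs" "{zs ! i, zs ! j} \<in> E"
    using assms(2) not_chordless_nth by blast
  then show thesis using that walk_take_drop[OF walk, of i j] by simp
qed

lemma chordless_path_from_walk: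
  assumes "path_edges zs \<subseteq> E" "zs \<noteq> []"
  obtains ws where "path_edges ws \<subseteq> E" "ws \<noteq> []" "hd ws = hd zs" "last ws = last zs"
    "set ws \<subseteq> set zs" "distinct ws" "chordless E ws"
  using assms
proof (induction "length zs" arbitrary: zs rule: less_induct)
  case less
  show thesis
  proof (cases "distinct zs \<and> chordless E zs")
    case True
    then show thesis using less.prems(1)[of zs] less.prems(2,3) by simp
  next
    case False
    obtain ws where "path_edges ws \<subseteq> E" "ws \<noteq> []" "hd ws = hd zs" "last ws = last zs"
      "set ws \<subseteq> set zs" "length ws < length zs"
      using walk_shorten[OF less.prems(2) False] by blast
    then show thesis using less.hyps[of ws] less.prems(1) by (metis order_trans)
  qed
qed

lemma induced_path_from_walk:
  assumes "path_edges (x # zs @ [y]) \<subseteq> E" "x \<noteq> y"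
  obtains ps where "path_edges (x # ps @ [y]) \<subseteq> E" "chordless E (x # ps @ [y])"
    "distinct (x # ps @ [y])" "set ps \<subseteq> set zs"
proof -
  obtain ws where ws: "path_edges ws \<subseteq> E" "ws \<noteq> []" "hd ws = x" "last ws = y"
    "set ws \<subseteq> insert x (insert y (set zs))" "distinct ws" "chordless E ws"
    using chordless_path_from_walk[OF assms(1)] by auto
  obtain vs where vs: "ws = x # vs" using ws(2,3) by (cases ws) auto
  then have "vs \<noteq> []" using ws(4) assms(2) by auto
  then obtain ps where "vs = ps @ [y]" using vs ws(4) by (metis append_butlast_last_id last_ConsR)
  with vs ws show thesis by (intro that[of ps]) auto
qed

lemma chordal_graph_cycle_chord:
  assumes "chordal_graph V E" "distinct cs" "4 \<le> length cs" "set cs \<subseteq> V"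
    and "path_edges (cs @ [hd cs]) \<subseteq> E"
  obtains a b where "a \<in> set cs" "b \<in> set cs" "a \<noteq> b" "{a, b} \<in> E"
    "{a, b} \<notin> path_edges (cs @ [hd cs])"
proof -
  let ?L = "length cs"
  have cs: "cs \<noteq> []" using assms(3) by auto
  have "\<forall>i<?L. {cs ! i, cs ! ((i + 1) mod ?L)} \<in> E"
    using assms(5) unfolding path_edges_cycle[OF cs] by auto
  then obtain i j where ij: "i < ?L" "j < ?L" "i \<noteq> j" "j \<noteq> (i + 1) mod ?L" "i \<noteq> (j + 1) mod ?L"
    "{cs ! i, cs ! j} \<in> E"
    using assms(1-4) unfolding chordal_graph_def by blast
  have "{cs ! i, cs ! j} \<noteq> {cs ! k, cs ! (Suc k mod ?L)}" if "k < ?L" for k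
  proof
    assume "{cs ! i, cs ! j} = {cs ! k, cs ! (Suc k mod ?L)}"
    moreover have "Suc k mod ?L < ?L" using cs by simp
    ultimately show False
      using ij that assms(2) by (auto simp: doubleton_eq_iff nth_eq_iff_index_eq)
  qed
  then have "{cs ! i, cs ! j} \<notin> path_edges (cs @ [hd cs])"
    unfolding path_edges_cycle[OF cs] by auto
  moreover have "cs ! i \<noteq> cs ! j" using ij assms(2) by (simp add: nth_eq_iff_index_eq)
  ultimately show thesis using ij by (intro that[of "cs ! i" "cs ! j"]) auto
qed

text \<open>Two induced paths between non-adjacent x and y whose interiors are disjoint and
  anticomplete to each other would form a chordless cycle of length at least 4.\<close>

lemma chordal_graph_no_anticomplete_paths:
  assumes chordal: "chordal_graph V E" and "x \<in> V" "y \<in> V" "x \<noteq> y" "{x, y} \<notin> E"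
    and "A \<subseteq> V" "B \<subseteq> V" "x \<notin> A \<union> B" "y \<notin> A \<union> B" "A \<inter> B = {}"
    and anticomplete: "\<forall>a\<in>A. \<forall>b\<in>B. {a, b} \<notin> E"
    and walk_A: "path_edges (x # zs @ [y]) \<subseteq> E" and "set zs \<subseteq> A"
    and walk_B: "path_edges (x # zs' @ [y]) \<subseteq> E" and "set zs' \<subseteq> B"
  shows False
proof -
  obtain ps where ps: "path_edges (x # ps @ [y]) \<subseteq> E" "chordless E (x # ps @ [y])"
    "distinct (x # ps @ [y])" "set ps \<subseteq> set zs"
    using induced_path_from_walk[OF walk_A \<open>x \<noteq> y\<close>] by blast
  obtain qs where qs: "path_edges (x # qs @ [y]) \<subseteq> E" "chordless E (x # qs @ [y])"
    "distinct (x # qs @ [y])" "set qs \<subseteq> set zs'"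
    using induced_path_from_walk[OF walk_B \<open>x \<noteq> y\<close>] by blast
  have psA: "set ps \<subseteq> A" and qsB: "set qs \<subseteq> B"
    using ps(4) qs(4) assms(13,15) by auto
  define cs where "cs = x # ps @ y # rev qs"
  have cycle: "path_edges (cs @ [hd cs]) = path_edges (x # ps @ [y]) \<union> path_edges (x # qs @ [y])"
  proof -
    have "cs @ [hd cs] = (x # ps @ [y]) @ rev (x # qs)" by (simp add: cs_def)
    moreover have "path_edges ((x # ps @ [y]) @ rev (x # qs)) =
        path_edges (x # ps @ [y]) \<union> path_edges (y # rev (x # qs))"
      unfolding path_edges_append[of "x # ps @ [y]"] path_edges_Cons[of y "rev (x # qs)"] by auto
    moreover have "y # rev (x # qs) = rev (x # qs @ [y])" by simp
    ultimately show ?thesis by (simp only: path_edges_rev)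
  qed
  have "ps \<noteq> []" "qs \<noteq> []" using ps(1) qs(1) \<open>{x, y} \<notin> E\<close> by auto
  then have long: "4 \<le> length cs" by (auto simp: cs_def neq_Nil_conv)
  have dist: "distinct cs"
    using ps(3) qs(3) psA qsB \<open>A \<inter> B = {}\<close> \<open>x \<notin> A \<union> B\<close> \<open>y \<notin> A \<union> B\<close>
    by (auto simp: cs_def)
  have in_V: "set cs \<subseteq> V"
    using psA qsB \<open>x \<in> V\<close> \<open>y \<in> V\<close> \<open>A \<subseteq> V\<close> \<open>B \<subseteq> V\<close> by (auto simp: cs_def)
  have "path_edges (cs @ [hd cs]) \<subseteq> E" using cycle ps(1) qs(1) by simp
  then obtain a b where ab: "a \<in> set cs" "b \<in> set cs" "a \<noteq> b" "{a, b} \<in> E"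
    "{a, b} \<notin> path_edges (cs @ [hd cs])"
    by (rule chordal_graph_cycle_chord[OF chordal dist long in_V])
  have "\<not> (a \<in> set (x # ps @ [y]) \<and> b \<in> set (x # ps @ [y]))"
    using ps(2) ab(3-5) unfolding chordless_def cycle by blast
  moreover have "\<not> (a \<in> set (x # qs @ [y]) \<and> b \<in> set (x # qs @ [y]))"
    using qs(2) ab(3-5) unfolding chordless_def cycle by blast
  ultimately have "a \<in> set ps \<and> b \<in> set qs \<or> a \<in> set qs \<and> b \<in> set ps"
    using ab(1,2) unfolding cs_def by auto
  then show False
    using anticomplete psA qsB ab(4) by (metis insert_commute subsetD)
qed

definition adj_rel :: "'a set \<Rightarrow> 'a set set \<Rightarrow> ('a \<times> 'a) set" where
  "adj_rel V E = {(p, q). p \<in> V \<and> q \<in> V \<and> {p, q} \<in> E}"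

lemma adj_rel_rtrancl_sym:
  assumes "(p, q) \<in> (adj_rel V E)\<^sup>*"
  shows "(q, p) \<in> (adj_rel V E)\<^sup>*"
proof -
  have "sym (adj_rel V E)" unfolding adj_rel_def sym_def by (auto simp: insert_commute)
  from sym_rtrancl[OF this] assms show ?thesis by (rule symD)
qed

lemma adj_rel_rtrancl_join:
  assumes "(a, p) \<in> (adj_rel V E)\<^sup>*" "(b, q) \<in> (adj_rel V E)\<^sup>*" "(p, q) \<in> (adj_rel V E)\<^sup>*"
  shows "(a, b) \<in> (adj_rel V E)\<^sup>*"
  using rtrancl_trans[OF rtrancl_trans[OF assms(1,3)] adj_rel_rtrancl_sym[OF assms(2)]] .

lemma adj_rel_rtrancl_mem: "(p, q) \<in> (adj_rel V E)\<^sup>* \<Longrightarrow> p \<in> V \<Longrightarrow> q \<in> V"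
  by (induction rule: rtrancl_induct) (auto simp: adj_rel_def)

lemma adj_rel_rtrancl_walk:
  assumes "(p, q) \<in> (adj_rel V E)\<^sup>*"
  obtains zs where "zs \<noteq> []" "hd zs = p" "last zs = q" "path_edges zs \<subseteq> E"
    "\<forall>z\<in>set zs. (p, z) \<in> (adj_rel V E)\<^sup>*"
  using assms
proof (induction arbitrary: thesis rule: rtrancl_induct)
  case base
  show ?case by (rule base.prems[of "[p]"]) auto
next
  case (step q q')
  obtain zs where zs: "zs \<noteq> []" "hd zs = p" "last zs = q" "path_edges zs \<subseteq> E"
    "\<forall>z\<in>set zs. (p, z) \<in> (adj_rel V E)\<^sup>*"
    using step.IH by blast
  have "{q, q'} \<in> E" using step.hyps(2) by (simp add: adj_rel_def)
  then show ?case
    using zs step.hyps by (intro step.prems[of "zs @ [q']"]) (auto simp: path_edges_append)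
qed

lemma adj_rel_component_walk:
  assumes "(c, p) \<in> (adj_rel V E)\<^sup>*" "(c, q) \<in> (adj_rel V E)\<^sup>*"
  obtains zs where "zs \<noteq> []" "hd zs = p" "last zs = q" "path_edges zs \<subseteq> E"
    "set zs \<subseteq> {z. (c, z) \<in> (adj_rel V E)\<^sup>*}"
proof -
  have "(p, q) \<in> (adj_rel V E)\<^sup>*" using rtrancl_trans[OF adj_rel_rtrancl_sym[OF assms(1)] assms(2)] .
  then obtain zs where "zs \<noteq> []" "hd zs = p" "last zs = q" "path_edges zs \<subseteq> E"
    "\<forall>z\<in>set zs. (p, z) \<in> (adj_rel V E)\<^sup>*"
    by (rule adj_rel_rtrancl_walk)
  with assms(1) show thesis by (intro that[of zs]) (auto intro: rtrancl_trans)
qed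

lemma adj_rel_rtrancl_insert:
  assumes "(c, z) \<in> (adj_rel (insert s V) E)\<^sup>*" "c \<in> V"
  shows "(c, z) \<in> (adj_rel V E)\<^sup>* \<or> (\<exists>a. (c, a) \<in> (adj_rel V E)\<^sup>* \<and> {s, a} \<in> E)"
  using assms(1)
proof (induction rule: rtrancl_induct)
  case (step z z')
  show ?case
  proof (cases "(c, z) \<in> (adj_rel V E)\<^sup>*")
    case True
    have "z \<in> V" using adj_rel_rtrancl_mem[OF True assms(2)] .
    have "{z, z'} \<in> E" "z' \<in> insert s V" using step.hyps(2) by (auto simp: adj_rel_def)
    show ?thesis
    proof (cases "z' = s")
      case True
      then have "{s, z} \<in> E" using \<open>{z, z'} \<in> E\<close> by (simp add: insert_commute)
      then show ?thesis using \<open>(c, z) \<in> (adj_rel V E)\<^sup>*\<close> by blast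
    next
      case False
      then have "(z, z') \<in> adj_rel V E"
        using \<open>z \<in> V\<close> \<open>{z, z'} \<in> E\<close> \<open>z' \<in> insert s V\<close> by (simp add: adj_rel_def)
      then show ?thesis using \<open>(c, z) \<in> (adj_rel V E)\<^sup>*\<close> by (simp add: rtrancl_into_rtrancl)
    qed
  next
    case False
    then show ?thesis using step.IH by blast
  qed
qed simp

lemma adj_rel_rtrancl_no_edge:
  assumes "a \<noteq> b" "{a, b} \<notin> E"
  shows "(a, b) \<notin> (adj_rel {a, b} E)\<^sup>*"
proof -
  have "z = a" if "(a, z) \<in> (adj_rel {a, b} E)\<^sup>*" for z
    using that by (induction rule: rtrancl_induct) (use assms(2) in \<open>auto simp: adj_rel_def\<close>)
  then show ?thesis using assms(1) by blast
qed

lemma minimal_separator_exists: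
  assumes "finite W" "a \<in> W" "b \<in> W" "a \<noteq> b" "{a, b} \<notin> E"
  obtains S where "S \<subseteq> W - {a, b}" "(a, b) \<notin> (adj_rel (W - S) E)\<^sup>*"
    "\<And>s. s \<in> S \<Longrightarrow> (a, b) \<in> (adj_rel (insert s (W - S)) E)\<^sup>*"
proof -
  define separator where
    "separator S \<longleftrightarrow> S \<subseteq> W - {a, b} \<and> (a, b) \<notin> (adj_rel (W - S) E)\<^sup>*" for S
  have "W - (W - {a, b}) = {a, b}" using assms(2,3) by auto
  then have "separator (W - {a, b})"
    using adj_rel_rtrancl_no_edge[OF assms(4,5)] unfolding separator_def by simp
  then obtain S where "separator S" and S_min: "\<forall>S'. separator S' \<longrightarrow> card S \<le> card S'"
    using ex_has_least_nat[of separator _ card] by blast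
  then have SW: "S \<subseteq> W - {a, b}" and "(a, b) \<notin> (adj_rel (W - S) E)\<^sup>*"
    unfolding separator_def by auto
  moreover have "(a, b) \<in> (adj_rel (insert s (W - S)) E)\<^sup>*" if "s \<in> S" for s
  proof -
    have "finite S" using finite_subset[of S W] SW assms(1) by blast
    then have "card (S - {s}) < card S" using \<open>s \<in> S\<close> by (rule card_Diff1_less)
    then have "\<not> separator (S - {s})" using S_min by (auto dest: leD)
    moreover have "W - (S - {s}) = insert s (W - S)" using \<open>s \<in> S\<close> SW by auto
    ultimately show ?thesis using SW unfolding separator_def by auto
  qed
  ultimately show thesis by (rule that)
qed

definition clique :: "'a set \<Rightarrow> 'a set set \<Rightarrow> bool" where
  "clique Q E \<longleftrightarrow> (\<forall>a\<in>Q. \<forall>b\<in>Q. a \<noteq> b \<longrightarrow> {a, b} \<in> E)"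

lemma clique_subset: "clique Q E \<Longrightarrow> P \<subseteq> Q \<Longrightarrow> clique P E"
  unfolding clique_def by blast

lemma clique_meets_one_component:
  assumes "clique Q E" "a \<in> V" "b \<in> V" "(a, b) \<notin> (adj_rel V E)\<^sup>*"
  shows "Q \<inter> {z. (a, z) \<in> (adj_rel V E)\<^sup>*} = {} \<or> Q \<inter> {z. (b, z) \<in> (adj_rel V E)\<^sup>*} = {}"
proof (rule ccontr)
  assume "\<not> ?thesis"
  then obtain p q where pq: "p \<in> Q" "q \<in> Q" "(a, p) \<in> (adj_rel V E)\<^sup>*" "(b, q) \<in> (adj_rel V E)\<^sup>*"
    by blast
  have "p \<in> V" "q \<in> V"
    using adj_rel_rtrancl_mem[OF pq(3) assms(2)] adj_rel_rtrancl_mem[OF pq(4) assms(3)] .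
  then have "(p, q) \<in> (adj_rel V E)\<^sup>*"
    using assms(1) pq(1,2) by (cases "p = q") (auto simp: clique_def adj_rel_def)
  then have "(a, b) \<in> (adj_rel V E)\<^sup>*" by (rule adj_rel_rtrancl_join[OF pq(3,4)])
  then show False using assms(4) by contradiction
qed

text \<open>By minimality, every vertex of the separator has a neighbour in the component of c.\<close>

lemma minimal_separator_path:
  assumes "c \<in> W - S" and separates: "(c, d) \<notin> (adj_rel (W - S) E)\<^sup>*"
    and minimal: "\<And>s. s \<in> S \<Longrightarrow> (c, d) \<in> (adj_rel (insert s (W - S)) E)\<^sup>*"
    and "x \<in> S" "y \<in> S"
  obtains zs where "path_edges (x # zs @ [y]) \<subseteq> E" "set zs \<subseteq> {z. (c, z) \<in> (adj_rel (W - S) E)\<^sup>*}"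
proof -
  let ?R = "adj_rel (W - S) E"
  have nbr: "\<exists>p. (c, p) \<in> ?R\<^sup>* \<and> {s, p} \<in> E" if "s \<in> S" for s
    using adj_rel_rtrancl_insert[OF minimal[OF that] \<open>c \<in> W - S\<close>] separates by blast
  obtain p where "(c, p) \<in> ?R\<^sup>*" "{x, p} \<in> E" using nbr[OF \<open>x \<in> S\<close>] by blast
  moreover obtain q where "(c, q) \<in> ?R\<^sup>*" "{y, q} \<in> E" using nbr[OF \<open>y \<in> S\<close>] by blast
  moreover obtain zs where "zs \<noteq> []" "hd zs = p" "last zs = q" "path_edges zs \<subseteq> E"
    "set zs \<subseteq> {z. (c, z) \<in> ?R\<^sup>*}"
    by (rule adj_rel_component_walk[OF calculation(1,3)])
  ultimately show thesis by (intro that[of zs]) (simp_all add: path_edges_Cons_snoc insert_commute)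
qed

lemma chordal_graph_minimal_separator_clique:
  assumes chordal: "chordal_graph W E" and "a \<in> W" "b \<in> W" "S \<subseteq> W - {a, b}"
    and separates: "(a, b) \<notin> (adj_rel (W - S) E)\<^sup>*"
    and minimal: "\<And>s. s \<in> S \<Longrightarrow> (a, b) \<in> (adj_rel (insert s (W - S)) E)\<^sup>*"
  shows "clique S E"
  unfolding clique_def
proof (intro ballI impI)
  fix x y assume xy: "x \<in> S" "y \<in> S" "x \<noteq> y"
  let ?R = "adj_rel (W - S) E"
  define A where "A = {z. (a, z) \<in> ?R\<^sup>*}"
  define B where "B = {z. (b, z) \<in> ?R\<^sup>*}"
  have a: "a \<in> W - S" and b: "b \<in> W - S" using assms(2-4) by auto
  have A: "A \<subseteq> W - S" and B: "B \<subseteq> W - S"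
    unfolding A_def B_def using adj_rel_rtrancl_mem[OF _ a] adj_rel_rtrancl_mem[OF _ b] by auto
  have disjoint: "A \<inter> B = {}"
    using adj_rel_rtrancl_join[OF _ _ rtrancl_refl, of a _ "W - S" E b] separates
    unfolding A_def B_def by blast
  have anticomplete: "\<forall>p\<in>A. \<forall>q\<in>B. {p, q} \<notin> E"
  proof (intro ballI notI)
    fix p q assume "p \<in> A" "q \<in> B" "{p, q} \<in> E"
    then have "(p, q) \<in> ?R\<^sup>*" using A B by (auto simp: adj_rel_def)
    with \<open>p \<in> A\<close> \<open>q \<in> B\<close> have "(a, b) \<in> ?R\<^sup>*"
      unfolding A_def B_def by (auto intro: adj_rel_rtrancl_join)
    then show False using separates by contradiction
  qed
  obtain zs where walk_A: "path_edges (x # zs @ [y]) \<subseteq> E" and "set zs \<subseteq> A"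
    unfolding A_def by (rule minimal_separator_path[OF a separates minimal xy(1,2)])
  have "(b, a) \<notin> ?R\<^sup>*" using separates adj_rel_rtrancl_sym[of b a] by blast
  moreover have "(b, a) \<in> (adj_rel (insert s (W - S)) E)\<^sup>*" if "s \<in> S" for s
    using minimal[OF that] by (rule adj_rel_rtrancl_sym)
  ultimately obtain zs' where walk_B: "path_edges (x # zs' @ [y]) \<subseteq> E" and "set zs' \<subseteq> B"
    unfolding B_def using minimal_separator_path[OF b _ _ xy(1,2)] by blast
  have "x \<in> W" "y \<in> W" "x \<notin> A \<union> B" "y \<notin> A \<union> B" "A \<subseteq> W" "B \<subseteq> W"
    using xy A B assms(4) by auto
  then show "{x, y} \<in> E"
    using chordal_graph_no_anticomplete_paths[OF chordal _ _ xy(3) _ _ _ _ _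
        disjoint anticomplete walk_A \<open>set zs \<subseteq> A\<close> walk_B \<open>set zs' \<subseteq> B\<close>]
    by blast
qed

lemma chordal_graph_subset: "chordal_graph V E \<Longrightarrow> W \<subseteq> V \<Longrightarrow> chordal_graph W E"
  unfolding chordal_graph_def by blast

definition simplicial :: "'a set \<Rightarrow> 'a set set \<Rightarrow> 'a \<Rightarrow> bool" where
  "simplicial W E s \<longleftrightarrow> s \<in> W \<and> clique {a \<in> W. {s, a} \<in> E} E"

lemma simplicial_component:
  assumes "simplicial (C \<union> S) E s" "s \<in> C"
    and C: "C = {z. (c, z) \<in> (adj_rel (W - S) E)\<^sup>*}" and "c \<in> W - S" "S \<subseteq> W"
  shows "simplicial W E s"
proof -
  have CW: "C \<subseteq> W - S" using adj_rel_rtrancl_mem[OF _ \<open>c \<in> W - S\<close>] C by auto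
  have "{a \<in> W. {s, a} \<in> E} \<subseteq> {a \<in> C \<union> S. {s, a} \<in> E}"
  proof safe
    fix a assume "a \<in> W" "{s, a} \<in> E" "a \<notin> S"
    then have "(s, a) \<in> adj_rel (W - S) E" using CW \<open>s \<in> C\<close> by (auto simp: adj_rel_def)
    with \<open>s \<in> C\<close> show "a \<in> C" unfolding C by (simp add: rtrancl_into_rtrancl)
  qed
  then show ?thesis
    using assms(1,5) CW \<open>s \<in> C\<close> unfolding simplicial_def by (auto intro: clique_subset)
qed

text \<open>Dirac's argument: if W is not a clique, a minimal separator S of two non-adjacent
  vertices is a clique; the clique Q misses one of the two components C separated by S,
  and induction on C \<union> S yields a vertex of C that is simplicial already in W.\<close>

lemma chordal_graph_simplicial_outside_clique:
  assumes "finite W" "chordal_graph W E" "Q \<subseteq> W" "clique Q E" "W - Q \<noteq> {}"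
  shows "\<exists>s\<in>W - Q. simplicial W E s"
  using assms
proof (induction "card W" arbitrary: W Q rule: less_induct)
  case less
  note finite = less.prems(1) and chordal = less.prems(2)
  show ?case
  proof (cases "clique W E")
    case True
    then show ?thesis using less.prems(5) unfolding simplicial_def by (auto intro: clique_subset)
  next
    case False
    then obtain a b where ab: "a \<in> W" "b \<in> W" "a \<noteq> b" "{a, b} \<notin> E"
      unfolding clique_def by blast
    obtain S where SW: "S \<subseteq> W - {a, b}" and sep: "(a, b) \<notin> (adj_rel (W - S) E)\<^sup>*"
      and min: "\<And>s. s \<in> S \<Longrightarrow> (a, b) \<in> (adj_rel (insert s (W - S)) E)\<^sup>*"
      using minimal_separator_exists[OF finite ab] by blast
    have "clique S E" by (rule chordal_graph_minimal_separator_clique[OF chordal ab(1,2) SW sep min])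
    let ?R = "adj_rel (W - S) E"
    have side: "\<exists>s\<in>W - Q. simplicial W E s"
      if C: "C = {z. (c, z) \<in> ?R\<^sup>*}" and c: "c \<in> W - S" and "Q \<inter> C = {}"
        and d: "d \<in> W - S" "d \<notin> C" for C c d
    proof -
      have CW: "C \<subseteq> W - S" using adj_rel_rtrancl_mem[OF _ c] C by auto
      have smaller: "C \<union> S \<subset> W" using CW SW d by auto
      then have "card (C \<union> S) < card W" by (rule psubset_card_mono[OF finite])
      moreover have "finite (C \<union> S)" using finite_subset[OF psubset_imp_subset[OF smaller] finite] .
      moreover have "chordal_graph (C \<union> S) E"
        using chordal_graph_subset[OF chordal psubset_imp_subset[OF smaller]] .
      moreover have "c \<in> C" using C by simp
      ultimately obtain s where s: "s \<in> C" "simplicial (C \<union> S) E s"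
        using less.hyps[of "C \<union> S" S] \<open>clique S E\<close> CW by blast
      then have "simplicial W E s" using simplicial_component[OF s(2,1) C c] SW by blast
      then show ?thesis using s(1) CW \<open>Q \<inter> C = {}\<close> by blast
    qed
    have a: "a \<in> W - S" and b: "b \<in> W - S" using ab SW by auto
    have "Q \<inter> {z. (a, z) \<in> ?R\<^sup>*} = {} \<or> Q \<inter> {z. (b, z) \<in> ?R\<^sup>*} = {}"
      by (rule clique_meets_one_component[OF less.prems(4) a b sep])
    moreover have "(b, a) \<notin> ?R\<^sup>*" using sep adj_rel_rtrancl_sym[of b a] by blast
    ultimately show ?thesis
      using side[OF refl a _ b] side[OF refl b _ a] sep by blast
  qed
qed

definition earlier_nbrs :: "'a set set \<Rightarrow> (nat \<Rightarrow> 'a) \<Rightarrow> nat \<Rightarrow> nat set" where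
  "earlier_nbrs E h j = {i. i < j \<and> {h i, h j} \<in> E}"

lemma earlier_nbrs_less: "earlier_nbrs E h j \<subseteq> {..<j}"
  unfolding earlier_nbrs_def by auto

definition perfect_elimination_order :: "'a set set \<Rightarrow> (nat \<Rightarrow> 'a) \<Rightarrow> nat \<Rightarrow> bool" where
  "perfect_elimination_order E h n \<longleftrightarrow> (\<forall>j<n. clique (h ` earlier_nbrs E h j) E)"

lemma chordal_graph_perfect_elimination_order:
  assumes "finite V" "chordal_graph V E"
  shows "\<exists>h. bij_betw h {..<card V} V \<and> perfect_elimination_order E h (card V)"
  using assms
proof (induction "card V" arbitrary: V)
  case 0
  then show ?case by (simp add: perfect_elimination_order_def bij_betw_def)
next
  case (Suc n)
  then have "V \<noteq> {}" by auto
  then obtain s where s: "s \<in> V" "simplicial V E s"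
    using chordal_graph_simplicial_outside_clique[of V E "{}"] Suc.prems by (auto simp: clique_def)
  define V' where "V' = V - {s}"
  have "n = card V'" using Suc.hyps(2) s(1) Suc.prems(1) by (simp add: V'_def)
  moreover have "finite V'" "chordal_graph V' E"
    using Suc.prems chordal_graph_subset[of V E V'] by (auto simp: V'_def)
  ultimately obtain h' where h': "bij_betw h' {..<n} V'" "perfect_elimination_order E h' n"
    using Suc.hyps(1) by blast
  define h where "h = h'(n := s)"
  have "bij_betw h {..<n} V'" using h'(1) bij_betw_cong[of "{..<n}" h h'] by (simp add: h_def)
  then have "bij_betw h ({..<n} \<union> {n}) (V' \<union> {h n})"
    by (intro notIn_Un_bij_betw) (auto simp: h_def V'_def)
  moreover have "{..<n} \<union> {n} = {..<card V}" "V' \<union> {h n} = V"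
    using Suc.hyps(2) s(1) by (auto simp: h_def V'_def)
  ultimately have bij: "bij_betw h {..<card V} V" by simp
  have "clique (h ` earlier_nbrs E h j) E" if "j < Suc n" for j
  proof (cases "j < n")
    case True
    then have "h ` earlier_nbrs E h j = h' ` earlier_nbrs E h' j"
      by (auto simp: earlier_nbrs_def h_def)
    then show ?thesis using h'(2) True by (simp add: perfect_elimination_order_def)
  next
    case False
    then have "j = n" using that by simp
    moreover have "h' i \<in> V" if "i < n" for i
      using h'(1) that by (auto simp: bij_betw_def V'_def)
    ultimately have "h ` earlier_nbrs E h j \<subseteq> {a \<in> V. {s, a} \<in> E}"
      by (auto simp: earlier_nbrs_def h_def insert_commute)
    then show ?thesis using s(2) unfolding simplicial_def by (blast intro: clique_subset)
  qed
  then show ?case using bij Suc.hyps(2) by (auto simp: perfect_elimination_order_def)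
qed

lemma card_earlier_nbrs_le:
  assumes "clique_number_le V E (t + 1)" "bij_betw h {..<n} V" "perfect_elimination_order E h n"
    and "j < n"
  shows "card (earlier_nbrs E h j) \<le> t"
proof -
  let ?N = "earlier_nbrs E h j"
  have N: "?N \<subseteq> {..<n}" using assms(4) by (auto simp: earlier_nbrs_def)
  have inj: "inj_on h {..<n}" using assms(2) by (simp add: bij_betw_def)
  have "h j \<notin> h ` ?N"
    using inj_on_image_mem_iff[OF inj _ N] assms(4) by (auto simp: earlier_nbrs_def)
  moreover have "finite ?N" using N finite_subset by blast
  ultimately have card: "card (insert (h j) (h ` ?N)) = card ?N + 1"
    using card_image[OF inj_on_subset[OF inj N]] by simp
  have "insert (h j) (h ` ?N) \<subseteq> V"
    using assms(2,4) N by (auto simp: bij_betw_def)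
  moreover have "finite (insert (h j) (h ` ?N))" using \<open>finite ?N\<close> by simp
  moreover have "clique (insert (h j) (h ` ?N)) E"
    using assms(3,4)
    by (auto simp: perfect_elimination_order_def clique_def earlier_nbrs_def insert_commute)
  ultimately have "card (insert (h j) (h ` ?N)) \<le> t + 1"
    using assms(1) unfolding clique_number_le_def clique_def by blast
  then show ?thesis using card by simp
qed

section \<open>Downward paths in the tree T_t\<close>

definition downward_walk :: "('v \<Rightarrow> nat) \<Rightarrow> ('v \<Rightarrow> 'v) \<Rightarrow> (nat \<Rightarrow> 'v) \<Rightarrow> nat \<Rightarrow> bool" where
  "downward_walk lay par r d \<longleftrightarrow> (\<forall>k<d. lay (r (Suc k)) = Suc (lay (r k)) \<and> par (r (Suc k)) = r k)"

lemma downward_path_walk: "downward_path lay par u p \<Longrightarrow> downward_walk lay par p d"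
  by (simp add: downward_path_def downward_walk_def)

lemma downward_walk_lay: "downward_walk lay par r d \<Longrightarrow> k \<le> d \<Longrightarrow> lay (r k) = lay (r 0) + k"
  by (induction k) (auto simp: downward_walk_def)

lemma downward_path_lay: "downward_path lay par u p \<Longrightarrow> lay (p k) = lay u + k"
  by (induction k) (auto simp: downward_path_def)

lemma downward_path_append:
  assumes "downward_walk lay par r d" "downward_path lay par (r d) q"
  shows "downward_path lay par (r 0) (\<lambda>k. if k \<le> d then r k else q (k - d))"
proof -
  let ?p = "\<lambda>k. if k \<le> d then r k else q (k - d)"
  have "lay (?p (Suc k)) = Suc (lay (?p k)) \<and> par (?p (Suc k)) = ?p k" for k
  proof (cases "Suc k \<le> d")
    case True
    then show ?thesis using assms(1) by (simp add: downward_walk_def)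
  next
    case False
    then have "Suc k - d = Suc (k - d)" by simp
    then show ?thesis using assms(2) False unfolding downward_path_def
      by (cases "k = d") auto
  qed
  then show ?thesis by (simp add: downward_path_def)
qed

lemma downward_path_inter_card_le:
  assumes "downward_path lay par u p" "\<And>k. p k \<in> X \<Longrightarrow> lay (p k) \<in> L" "finite L"
  shows "finite (range p \<inter> X) \<and> card (range p \<inter> X) \<le> card L"
proof -
  have "inj_on lay (range p)"
    using downward_path_lay[OF assms(1)] by (auto intro!: inj_onI)
  then have inj: "inj_on lay (range p \<inter> X)" by (rule inj_on_subset) blast
  moreover have sub: "lay ` (range p \<inter> X) \<subseteq> L" using assms(2) by auto
  ultimately show ?thesis
    using finite_imageD[OF finite_subset[OF sub assms(3)] inj] card_inj_on_le[OF inj sub assms(3)]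
    by blast
qed

locale Gt_tree =
  fixes t :: nat and lay pos :: "'v \<Rightarrow> nat" and par :: "'v \<Rightarrow> 'v"
    and lab :: "'v \<Rightarrow> 'v set \<times> 'v set" and EB ER :: "'v set set"
  assumes Gt: "Gt_construction t lay pos par lab EB ER"
begin

lemma lay_par: "0 < lay v \<Longrightarrow> lay v = Suc (lay (par v))"
  using Gt unfolding Gt_construction_def by auto

lemma admissible_lab_par: "0 < lay v \<Longrightarrow> admissible t lay EB ER (par v) (fst (lab v)) (snd (lab v))"
  using Gt unfolding Gt_construction_def by blast

lemma child_unique:
  "admissible t lay EB ER x B R \<Longrightarrow> \<exists>!c. 0 < lay c \<and> par c = x \<and> lab c = (B, R)"
  using Gt unfolding Gt_construction_def by blast

lemma EB_eq: "EB = {{v, w} | v w. lay v = lay w \<and> pos w = Suc (pos v)}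
    \<union> {{v, b} | v b. 0 < lay v \<and> b \<in> fst (lab v)}"
  using Gt unfolding Gt_construction_def by blast

lemma ER_eq: "ER = {{v, r} | v r. 0 < lay v \<and> r \<in> snd (lab v)}"
  using Gt unfolding Gt_construction_def by blast

lemma lay_le_Nup: "w \<in> Nup lay EB ER x \<Longrightarrow> lay w \<le> lay x"
  unfolding Nup_def by auto

lemma lay_lab_less: "0 < lay v \<Longrightarrow> w \<in> fst (lab v) \<union> snd (lab v) \<Longrightarrow> lay w < lay v"
  using admissible_lab_par[of v] lay_par[of v] lay_le_Nup[of w "par v"]
  unfolding admissible_def by fastforce

lemma lab_subset_Nup: "0 < lay v \<Longrightarrow> fst (lab v) \<union> snd (lab v) \<subseteq> Nup lay EB ER v"
proof
  fix w assume v: "0 < lay v" and w: "w \<in> fst (lab v) \<union> snd (lab v)"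
  have "{v, w} \<in> EB \<union> ER"
    using w v unfolding EB_eq ER_eq by blast
  then show "w \<in> Nup lay EB ER v"
    using lay_lab_less[OF v w] unfolding Nup_def by auto
qed

lemma EB_across_layers:
  assumes "lay a < lay b"
  shows "{a, b} \<in> EB \<longleftrightarrow> 0 < lay b \<and> a \<in> fst (lab b)"
proof
  assume "{a, b} \<in> EB"
  then consider (layer) v w where "{a, b} = {v, w}" "lay v = lay w"
    | (up) v c where "{a, b} = {v, c}" "0 < lay v" "c \<in> fst (lab v)"
    unfolding EB_eq by blast
  then show "0 < lay b \<and> a \<in> fst (lab b)"
  proof cases
    case layer
    then show ?thesis using assms by (auto simp: doubleton_eq_iff)
  next
    case up
    then show ?thesis using assms lay_lab_less[OF up(2), of c] by (auto simp: doubleton_eq_iff)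
  qed
next
  assume "0 < lay b \<and> a \<in> fst (lab b)"
  then show "{a, b} \<in> EB" unfolding EB_eq by (blast intro: insert_commute)
qed

lemma ER_across_layers:
  assumes "lay a < lay b"
  shows "{a, b} \<in> ER \<longleftrightarrow> 0 < lay b \<and> a \<in> snd (lab b)"
proof
  assume "{a, b} \<in> ER"
  then obtain v c where "{a, b} = {v, c}" "0 < lay v" "c \<in> snd (lab v)"
    unfolding ER_eq by blast
  then show "0 < lay b \<and> a \<in> snd (lab b)"
    using assms lay_lab_less[of v c] by (auto simp: doubleton_eq_iff)
next
  assume "0 < lay b \<and> a \<in> snd (lab b)"
  then show "{a, b} \<in> ER" unfolding ER_eq by (blast intro: insert_commute)
qed

lemma admissible_lab: "0 < lay v \<Longrightarrow> admissible t lay EB ER v (fst (lab v)) (snd (lab v))"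
  using admissible_lab_par[of v] lab_subset_Nup[of v] unfolding admissible_def by blast

text \<open>Iterate the child created for (B, R); the pair stays admissible since the label of a
  vertex lies in its upper neighbourhood.\<close>

lemma downward_path_labelled:
  assumes "admissible t lay EB ER x B R"
  shows "\<exists>p. downward_path lay par x p \<and> (\<forall>k>0. lab (p k) = (B, R))"
proof -
  define child where "child v = (THE c. 0 < lay c \<and> par c = v \<and> lab c = (B, R))" for v
  have child: "0 < lay (child v) \<and> par (child v) = v \<and> lab (child v) = (B, R)"
    if "admissible t lay EB ER v B R" for v
    unfolding child_def using theI'[OF child_unique[OF that]] .
  define p where "p k = (child ^^ k) x" for k
  have adm: "admissible t lay EB ER (p k) B R" for k
  proof (induction k)
    case (Suc k)
    then show ?case using child[OF Suc] admissible_lab[of "child (p k)"] by (simp add: p_def)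
  qed (simp add: p_def assms)
  have "lay (p (Suc k)) = Suc (lay (p k)) \<and> par (p (Suc k)) = p k" for k
    using child[OF adm, of k] lay_par[of "p (Suc k)"] by (simp add: p_def)
  then have "downward_path lay par x p" by (simp add: downward_path_def p_def)
  moreover have "lab (p k) = (B, R)" if "k > 0" for k
    using that child[OF adm, of "k - 1"] by (cases k) (simp_all add: p_def)
  ultimately show ?thesis by blast
qed

end

section \<open>Embedding H greedily\<close>

locale Gt_embedding = Gt_tree t lay pos par lab EB ER
  for t :: nat and lay pos :: "'v \<Rightarrow> nat" and par :: "'v \<Rightarrow> 'v"
    and lab :: "'v \<Rightarrow> 'v set \<times> 'v set" and EB ER :: "'v set set" +
  fixes H :: "'w trigraph" and h :: "nat \<Rightarrow> 'w" and n :: nat and X :: "'v set" and u :: 'v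
  assumes trigraph: "is_trigraph H"
    and enum: "bij_betw h {..<n} (tverts H)"
    and peo: "perfect_elimination_order (total_edges H) h n"
    and back_degree: "\<And>j. j < n \<Longrightarrow> card (earlier_nbrs (total_edges H) h j) \<le> t"
    and X_dense: "\<And>p. downward_path lay par u p \<Longrightarrow> infinite (range p \<inter> X) \<or> n \<le> card (range p \<inter> X)"
begin

abbreviation nbrs :: "nat \<Rightarrow> nat set" where
  "nbrs \<equiv> earlier_nbrs (total_edges H) h"

abbreviation black_nbrs :: "nat \<Rightarrow> nat set" where
  "black_nbrs \<equiv> earlier_nbrs (tblack H) h"

abbreviation red_nbrs :: "nat \<Rightarrow> nat set" where
  "red_nbrs \<equiv> earlier_nbrs (tred H) h"

lemma nbrs_black_red: "nbrs j = black_nbrs j \<union> red_nbrs j"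
  unfolding earlier_nbrs_def total_edges_def by auto

lemma black_red_nbrs_disjoint: "black_nbrs j \<inter> red_nbrs j = {}"
  using trigraph unfolding earlier_nbrs_def is_trigraph_def by auto

text \<open>x j is the image of h j, reached from u along the tree path r of length d. Unless x j = u, it was created from the images
  of the black and of the red earlier neighbours of h j.\<close>

definition placed :: "(nat \<Rightarrow> 'v) \<Rightarrow> nat \<Rightarrow> (nat \<Rightarrow> 'v) \<Rightarrow> nat \<Rightarrow> bool" where
  "placed x j r d \<longleftrightarrow> r 0 = u \<and> downward_walk lay par r d \<and> r d = x j \<and> x j \<in> X
     \<and> (\<forall>k\<le>d. r k \<in> X \<longrightarrow> lay (r k) \<in> lay ` x ` {..j})
     \<and> (\<forall>i<j. lay (x i) \<noteq> lay (x j))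
     \<and> x ` nbrs j \<subseteq> Nup lay EB ER (x j)
     \<and> (0 < d \<longrightarrow> lab (x j) = (x ` black_nbrs j, x ` red_nbrs j))
     \<and> (d = 0 \<longrightarrow> nbrs j = {})"

definition partial_embedding :: "nat \<Rightarrow> (nat \<Rightarrow> 'v) \<Rightarrow> (nat \<Rightarrow> nat) \<Rightarrow> (nat \<Rightarrow> nat \<Rightarrow> 'v) \<Rightarrow> bool" where
  "partial_embedding m x d r \<longleftrightarrow> (\<forall>j<m. placed x j (r j) (d j))"

lemma placed_cong:
  assumes "placed x j r d" "\<And>i. i \<le> j \<Longrightarrow> x' i = x i"
  shows "placed x' j r d"
proof -
  have image: "x' ` A = x ` A" if "A \<subseteq> {..j}" for A
    using assms(2) that by (auto intro!: image_cong)
  have "nbrs j \<subseteq> {..j}" "black_nbrs j \<subseteq> {..j}" "red_nbrs j \<subseteq> {..j}"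
    using earlier_nbrs_less by fastforce+
  then show ?thesis
    using assms unfolding placed_def by (simp add: image)
qed

lemma partial_embedding_Suc:
  assumes "partial_embedding m x d r" "placed (x(m := z)) m r' d'"
  shows "partial_embedding (Suc m) (x(m := z)) (d(m := d')) (r(m := r'))"
  unfolding partial_embedding_def
proof (intro allI impI)
  fix j assume "j < Suc m"
  then consider "j < m" | "j = m" by linarith
  then show "placed (x(m := z)) j ((r(m := r')) j) ((d(m := d')) j)"
  proof cases
    case 1
    then show ?thesis
      using assms(1) unfolding partial_embedding_def by (auto intro: placed_cong)
  qed (use assms(2) in simp)
qed

lemma placed_lay: "placed x j r d \<Longrightarrow> lay (x j) = lay u + d"
  unfolding placed_def using downward_walk_lay[of lay par r d d] by auto

lemma partial_embedding_inj: "partial_embedding m x d r \<Longrightarrow> inj_on x {..<m}"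
  unfolding partial_embedding_def placed_def by (metis inj_onI lessThan_iff linorder_neqE_nat)

lemma downward_path_new_level:
  assumes D: "downward_path lay par u D" and "finite L" "card L < n"
  shows "\<exists>k. D k \<in> X \<and> lay (D k) \<notin> L"
proof (rule ccontr)
  assume "\<nexists>k. D k \<in> X \<and> lay (D k) \<notin> L"
  then have "finite (range D \<inter> X) \<and> card (range D \<inter> X) \<le> card L"
    using downward_path_inter_card_le[OF D, of X L] \<open>finite L\<close> by blast
  then show False using X_dense[OF D] \<open>card L < n\<close> by linarith
qed

definition search_path :: "nat \<Rightarrow> (nat \<Rightarrow> 'v) \<Rightarrow> (nat \<Rightarrow> 'v) \<Rightarrow> nat \<Rightarrow> bool" where
  "search_path m x D s \<longleftrightarrow> downward_path lay par u D
     \<and> (\<forall>k<s. D k \<in> X \<longrightarrow> lay (D k) \<in> lay ` x ` {..<m})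
     \<and> (\<forall>k\<ge>s. 0 < k \<longrightarrow> lab (D k) = (x ` black_nbrs m, x ` red_nbrs m))
     \<and> (s = 0 \<longrightarrow> nbrs m = {})"

text \<open>The search path meets X at least n > m times, so it meets X on a level not used by
  x 0, ..., x (m - 1); the first such vertex is placed as x m.\<close>

lemma place_next:
  assumes "m < n" and "search_path m x D s"
  shows "\<exists>k. placed (x(m := D k)) m D k"
proof -
  have D: "downward_path lay par u D"
    and before: "\<And>k. k < s \<Longrightarrow> D k \<in> X \<Longrightarrow> lay (D k) \<in> lay ` x ` {..<m}"
    and below: "\<And>k. s \<le> k \<Longrightarrow> 0 < k \<Longrightarrow> lab (D k) = (x ` black_nbrs m, x ` red_nbrs m)"
    and root: "s = 0 \<Longrightarrow> nbrs m = {}"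
    using assms(2) unfolding search_path_def by auto
  define L where "L = lay ` x ` {..<m}"
  define new where "new k \<longleftrightarrow> D k \<in> X \<and> lay (D k) \<notin> L" for k
  have "card L \<le> m" unfolding L_def
    by (metis card_image_le card_lessThan finite_lessThan image_image)
  then have "\<exists>k. new k"
    using downward_path_new_level[OF D, of L] \<open>m < n\<close> unfolding new_def L_def by simp
  define k where "k = (LEAST k. new k)"
  have "new k" unfolding k_def using \<open>\<exists>k. new k\<close> by (rule LeastI_ex)
  have old: "lay (D i) \<in> L" if "i < k" "D i \<in> X" for i
    using not_less_Least[of i new] that unfolding k_def new_def by blast
  have "s \<le> k" using before \<open>new k\<close> unfolding new_def L_def by (meson not_le)
  let ?x = "x(m := D k)"
  have levels: "lay ` ?x ` {..m} = insert (lay (D k)) L"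
    unfolding L_def by (auto simp: lessThan_Suc_atMost[symmetric] lessThan_Suc)
  have image: "?x ` A = x ` A" if "A \<subseteq> {..<m}" for A
    using that by (auto intro!: image_cong)
  have "?x ` black_nbrs m = x ` black_nbrs m" "?x ` red_nbrs m = x ` red_nbrs m"
    by (rule image[OF earlier_nbrs_less])+
  then have images: "?x ` nbrs m = x ` black_nbrs m \<union> x ` red_nbrs m"
    "?x ` black_nbrs m = x ` black_nbrs m" "?x ` red_nbrs m = x ` red_nbrs m"
    unfolding nbrs_black_red[of m] image_Un by simp_all
  have "?x ` nbrs m \<subseteq> Nup lay EB ER (D k)"
  proof (cases "nbrs m = {}")
    case False
    then have "0 < k" using root \<open>s \<le> k\<close> by auto
    then show ?thesis
      using below[OF \<open>s \<le> k\<close>] lab_subset_Nup[of "D k"] downward_path_lay[OF D, of k] images(1)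
      by simp
  qed simp
  moreover have "\<forall>i\<le>k. D i \<in> X \<longrightarrow> lay (D i) \<in> lay ` ?x ` {..m}"
    using old levels by (metis insertCI le_neq_implies_less)
  moreover have "\<forall>i<m. lay (?x i) \<noteq> lay (?x m)"
  proof (intro allI impI)
    fix i assume "i < m"
    then have "lay (x i) \<in> L" unfolding L_def by blast
    then show "lay (?x i) \<noteq> lay (?x m)" using \<open>new k\<close> \<open>i < m\<close> unfolding new_def by auto
  qed
  ultimately have "placed ?x m D k"
    unfolding placed_def using D \<open>new k\<close> below[OF \<open>s \<le> k\<close>] root \<open>s \<le> k\<close> images(2,3)
    by (auto simp: new_def downward_path_def downward_path_walk)
  then show ?thesis by blast
qed

text \<open>The earlier neighbours of h m form a clique, so all of them other than the last one, p,
  are earlier neighbours of h p; hence their images lie in the upper neighbourhood of x p.\<close>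

lemma admissible_last_nbr:
  assumes emb: "partial_embedding m x d r" and "m < n" "nbrs m \<noteq> {}"
  shows "admissible t lay EB ER (x (Max (nbrs m))) (x ` black_nbrs m) (x ` red_nbrs m)"
  unfolding admissible_def
proof (intro conjI)
  let ?p = "Max (nbrs m)"
  have fin: "finite (nbrs m)" using finite_subset[OF earlier_nbrs_less] by blast
  have p: "?p \<in> nbrs m" using Max_in[OF fin assms(3)] .
  then have "?p < m" using earlier_nbrs_less by blast
  have inj: "inj_on x {..<m}" using partial_embedding_inj[OF emb] .
  have "x ` black_nbrs m \<inter> x ` red_nbrs m = x ` (black_nbrs m \<inter> red_nbrs m)"
    by (rule inj_on_image_Int[OF inj earlier_nbrs_less earlier_nbrs_less, symmetric])
  then show "x ` black_nbrs m \<inter> x ` red_nbrs m = {}" by (simp add: black_red_nbrs_disjoint)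
  have "i \<in> nbrs ?p" if "i \<in> nbrs m" "i \<noteq> ?p" for i
  proof -
    have "i < ?p" using Max_ge[OF fin that(1)] that(2) by simp
    moreover have "h i \<noteq> h ?p"
    proof
      assume "h i = h ?p"
      moreover have "inj_on h {..<n}" using enum by (simp add: bij_betw_def)
      ultimately have "i = ?p" using \<open>i < ?p\<close> \<open>?p < m\<close> \<open>m < n\<close> by (auto dest: inj_onD)
      then show False using \<open>i < ?p\<close> by simp
    qed
    moreover have "clique (h ` nbrs m) (total_edges H)"
      using peo \<open>m < n\<close> by (simp add: perfect_elimination_order_def)
    ultimately have "{h i, h ?p} \<in> total_edges H"
      using p that(1) unfolding clique_def by blast
    then show ?thesis using \<open>i < ?p\<close> by (simp add: earlier_nbrs_def)
  qed
  moreover have "x ` nbrs ?p \<subseteq> Nup lay EB ER (x ?p)"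
    using emb \<open>?p < m\<close> unfolding partial_embedding_def placed_def by blast
  ultimately have "x ` nbrs m \<subseteq> Nup lay EB ER (x ?p)"
    unfolding Nup_def by blast
  then show "x ` black_nbrs m \<union> x ` red_nbrs m \<subseteq> Nup lay EB ER (x ?p)"
    by (simp add: nbrs_black_red image_Un)
  show "finite (x ` black_nbrs m \<union> x ` red_nbrs m)"
    using fin by (simp add: nbrs_black_red)
  have "card (x ` nbrs m) \<le> t"
    using card_image_le[OF fin, of x] back_degree[OF \<open>m < n\<close>] by linarith
  then show "card (x ` black_nbrs m \<union> x ` red_nbrs m) \<le> t"
    by (simp add: nbrs_black_red image_Un)
qed

text \<open>If h m has earlier neighbours, follow the tree path to the image x p of the last one and
  continue with the children created for the adjacencies of h m; otherwise use the children
  of u created for the empty pair.\<close>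

lemma search_path_exists:
  assumes emb: "partial_embedding m x d r" and "m < n"
  shows "\<exists>D s. search_path m x D s"
proof (cases "nbrs m = {}")
  case True
  have "admissible t lay EB ER u {} {}" by (simp add: admissible_def)
  then obtain D where "downward_path lay par u D" "\<forall>k>0. lab (D k) = ({}, {})"
    using downward_path_labelled by blast
  then have "search_path m x D 0"
    using True nbrs_black_red[of m] unfolding search_path_def by auto
  then show ?thesis by blast
next
  case False
  let ?p = "Max (nbrs m)"
  have "?p < m"
    using Max_in[OF finite_subset[OF earlier_nbrs_less] False] earlier_nbrs_less by blast
  then have placed_p: "placed x ?p (r ?p) (d ?p)"
    using emb unfolding partial_embedding_def by blast
  obtain C where C: "downward_path lay par (x ?p) C"
    "\<forall>k>0. lab (C k) = (x ` black_nbrs m, x ` red_nbrs m)"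
    using downward_path_labelled[OF admissible_last_nbr[OF emb \<open>m < n\<close> False]] by blast
  define D where "D k = (if k \<le> d ?p then r ?p k else C (k - d ?p))" for k
  have "downward_path lay par u D"
    using downward_path_append[of lay par "r ?p" "d ?p" C] C(1) placed_p
    unfolding placed_def D_def by simp
  moreover have "lay (D k) \<in> lay ` x ` {..<m}" if "k < Suc (d ?p)" "D k \<in> X" for k
  proof -
    have "lay (r ?p k) \<in> lay ` x ` {..?p}" using placed_p that unfolding placed_def D_def by simp
    moreover have "{..?p} \<subseteq> {..<m}" using \<open>?p < m\<close> by auto
    ultimately show ?thesis using that(1) unfolding D_def by auto
  qed
  moreover have "lab (D k) = (x ` black_nbrs m, x ` red_nbrs m)" if "Suc (d ?p) \<le> k" for k
    using C(2) that unfolding D_def by simp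
  ultimately have "search_path m x D (Suc (d ?p))" unfolding search_path_def by auto
  then show ?thesis by blast
qed

lemma partial_embedding_extend:
  assumes emb: "partial_embedding m x d r" and "m < n"
  shows "\<exists>x' d' r'. partial_embedding (Suc m) x' d' r'"
proof -
  obtain D s where "search_path m x D s" using search_path_exists[OF assms] by blast
  then obtain k where "placed (x(m := D k)) m D k" using place_next[OF \<open>m < n\<close>] by blast
  then show ?thesis using partial_embedding_Suc[OF emb] by blast
qed

lemma partial_embedding_exists: "m \<le> n \<Longrightarrow> \<exists>x d r. partial_embedding m x d r"
proof (induction m)
  case 0
  then show ?case by (simp add: partial_embedding_def)
next
  case (Suc m)
  then show ?case using partial_embedding_extend by auto
qed

text \<open>Of two placed vertices, the deeper one was created from the images of its black and red
  earlier neighbours; this never lists a later vertex, and no earlier neighbour of a placed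
  vertex is deeper than it.\<close>

lemma partial_embedding_adjacency:
  assumes emb: "partial_embedding m x d r" and "i < j" "j < m"
  shows "({x i, x j} \<in> EB \<longleftrightarrow> {h i, h j} \<in> tblack H) \<and> ({x i, x j} \<in> ER \<longleftrightarrow> {h i, h j} \<in> tred H)"
proof -
  have placed: "placed x i (r i) (d i)" "placed x j (r j) (d j)"
    using emb assms(2,3) unfolding partial_embedding_def by auto
  have mem: "x a \<in> x ` A \<longleftrightarrow> a \<in> A" if "a < m" "A \<subseteq> {..<m}" for a A
    using inj_on_image_mem_iff[OF partial_embedding_inj[OF emb]] that by simp
  have nbrs_m: "earlier_nbrs E h k \<subseteq> {..<m}" if "k < m" for E k
    using earlier_nbrs_less that by fastforce
  have "lay (x i) \<noteq> lay (x j)" using placed(2) assms(2) unfolding placed_def by blast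
  then consider "lay (x i) < lay (x j)" | "lay (x j) < lay (x i)" by linarith
  then show ?thesis
  proof cases
    case 1
    then have "0 < d j" using placed_lay[OF placed(1)] placed_lay[OF placed(2)] by simp
    then have "lab (x j) = (x ` black_nbrs j, x ` red_nbrs j)" using placed(2) unfolding placed_def by blast
    then show ?thesis
      using EB_across_layers[OF 1] ER_across_layers[OF 1] 1 mem[OF _ nbrs_m] assms(2,3)
      by (auto simp: earlier_nbrs_def)
  next
    case 2
    then have "0 < d i" using placed_lay[OF placed(1)] placed_lay[OF placed(2)] by simp
    then have "lab (x i) = (x ` black_nbrs i, x ` red_nbrs i)" using placed(1) unfolding placed_def by blast
    moreover have "j \<notin> black_nbrs i" "j \<notin> red_nbrs i"
      using assms(2) earlier_nbrs_less by fastforce+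
    then have "x j \<notin> x ` black_nbrs i" "x j \<notin> x ` red_nbrs i"
      using mem[OF assms(3) nbrs_m] assms(2,3) by simp_all
    ultimately have "{x j, x i} \<notin> EB" "{x j, x i} \<notin> ER"
      using EB_across_layers[OF 2] ER_across_layers[OF 2] by simp_all
    then have "{x i, x j} \<notin> EB" "{x i, x j} \<notin> ER" by (simp_all add: insert_commute)
    moreover have "i \<notin> nbrs j"
    proof
      assume "i \<in> nbrs j"
      then have "x i \<in> Nup lay EB ER (x j)" using placed(2) unfolding placed_def by blast
      then show False using lay_le_Nup 2 by fastforce
    qed
    ultimately show ?thesis using assms(2) by (auto simp: earlier_nbrs_def total_edges_def)
  qed
qed

lemma partial_embedding_iso:
  assumes emb: "partial_embedding n x d r"
  shows "trigraph_iso (induced_sub (induced_sub (UNIV, EB, ER) X) (x ` {..<n})) H"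
proof -
  let ?G = "induced_sub (induced_sub (UNIV, EB, ER) X) (x ` {..<n})"
  have XY: "x ` {..<n} \<subseteq> X" using emb unfolding partial_embedding_def placed_def by auto
  have "bij_betw x {..<n} (x ` {..<n})"
    using partial_embedding_inj[OF emb] by (simp add: bij_betw_imageI)
  then have bij: "bij_betw (h \<circ> the_inv_into {..<n} x) (x ` {..<n}) (tverts H)"
    using bij_betw_trans[OF bij_betw_the_inv_into enum] by blast
  have f: "(h \<circ> the_inv_into {..<n} x) (x i) = h i" if "i < n" for i
    using the_inv_into_f_f[OF partial_embedding_inj[OF emb]] that by simp
  have adj: "({x i, x j} \<in> EB \<longleftrightarrow> {h i, h j} \<in> tblack H) \<and> ({x i, x j} \<in> ER \<longleftrightarrow> {h i, h j} \<in> tred H)"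
    if "i < n" "j < n" "i \<noteq> j" for i j
  proof (cases "i < j")
    case True
    then show ?thesis using partial_embedding_adjacency[OF emb _ that(2)] by simp
  next
    case False
    then show ?thesis
      using partial_embedding_adjacency[OF emb _ that(1), of j] that(3) by (simp add: insert_commute)
  qed
  show ?thesis
    unfolding trigraph_iso_def
  proof (intro exI conjI ballI impI)
    show "bij_betw (h \<circ> the_inv_into {..<n} x) (tverts ?G) (tverts H)"
      using bij by (simp add: induced_sub_def tverts_def)
  next
    fix a b assume "a \<in> tverts ?G" "b \<in> tverts ?G" "a \<noteq> b"
    then obtain i j where "i < n" "j < n" "a = x i" "b = x j" "i \<noteq> j"
      by (auto simp: induced_sub_def tverts_def)
    then show "({a, b} \<in> tblack ?G) = ({(h \<circ> the_inv_into {..<n} x) a, (h \<circ> the_inv_into {..<n} x) b} \<in> tblack H)"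
      and "({a, b} \<in> tred ?G) = ({(h \<circ> the_inv_into {..<n} x) a, (h \<circ> the_inv_into {..<n} x) b} \<in> tred H)"
      using adj[of i j] f XY by (auto simp: induced_sub_def tblack_def tred_def)
  qed
qed

theorem not_H_free: "\<not> H_free (induced_sub (UNIV, EB, ER) X) H"
proof -
  obtain x d r where emb: "partial_embedding n x d r" using partial_embedding_exists by blast
  then have "x ` {..<n} \<subseteq> tverts (induced_sub (UNIV, EB, ER) X)"
    unfolding partial_embedding_def placed_def by (auto simp: induced_sub_def tverts_def)
  with partial_embedding_iso[OF emb] show ?thesis
    unfolding H_free_def by blast
qed

end

theorem lemma4p5:
  fixes t :: nat
    and lay pos :: "'v \<Rightarrow> nat" and par :: "'v \<Rightarrow> 'v" and lab :: "'v \<Rightarrow> 'v set \<times> 'v set"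
    and EB ER :: "'v set set"
    and H :: "'w trigraph"
    and X :: "'v set" and u :: 'v
  assumes "t \<ge> 1"
    and "Gt_construction t lay pos par lab EB ER"
    and "is_trigraph H" and "finite (tverts H)"
    and "chordal_trigraph H"
    and "clique_number_le (tverts H) (total_edges H) (t + 1)"
    and "H_free (induced_sub (UNIV, EB, ER) X) H"
  shows "\<exists>p. downward_path lay par u p \<and> finite (range p \<inter> X) \<and>
           card (range p \<inter> X) \<le> card (tverts H) - 1"
proof (rule ccontr)
  assume no_path: "\<not> ?thesis"
  let ?n = "card (tverts H)"
  obtain h where enum: "bij_betw h {..<?n} (tverts H)"
    and peo: "perfect_elimination_order (total_edges H) h ?n"
    using chordal_graph_perfect_elimination_order assms(4,5) unfolding chordal_trigraph_def by blast
  have dense: "infinite (range p \<inter> X) \<or> ?n \<le> card (range p \<inter> X)"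
    if "downward_path lay par u p" for p
    using no_path that by force
  interpret Gt_embedding t lay pos par lab EB ER H h ?n X u
    by unfold_locales
      (fact assms(2) assms(3) enum peo dense card_earlier_nbrs_le[OF assms(6) enum peo])+
  show False using not_H_free assms(7) by contradiction
qed

end
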